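(* Let $k$ be a field of characteristic $\neq 2$, let $\mathcal O$ be the Lie algebra described in the context, and let $J=q(t)k[t]$ be a nonzero ideal of $k[t]$; put $w_i=v_iq(t)$, $i=0,1,2$. Then the ideals $\mathcal I$ of $\mathcal O$ with $J_{\mathcal I}=J$ are exactly the subspaces $\mathcal I=\mathcal O Jt(t-1)\oplus\mathcal S$ where $\mathcal S$ is of one of the following types: (i) $\mathcal S=k\epsilon(w_0t+w_1t)\oplus k\delta(w_0t-w_1t)\oplus k\epsilon\delta\gamma\, w_2t\oplus k\epsilon'(w_0(t-1)+w_2(t-1))\oplus k\delta'(w_0(t-1)-w_2(t-1))\oplus k\epsilon'\delta'\gamma'\, w_1(t-1)$, where $\epsilon,\delta,\gamma,\epsilon',\delta',\gamma'\in\{0,1\}$ with $\epsilon+\delta\neq0\neq\epsilon'+\delta'$; (ii) $\mathcal S=\mathcal S_\eta=\mathrm{span}\{w_0t,\ w_1t,\ w_0(t-1),\ w_2(t-1),\ w_2t+\eta w_1(t-1)\}$ with $0\neq\eta\in k$.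
   Context: $\mathcal O$ is the Lie algebra over $k$ which is a free $k[t]$-module with basis $v_0,v_1,v_2$, with $k[t]$-bilinear bracket determined by $[v_0,v_1]=-v_2(t-1)$, $[v_1,v_2]=-v_0$, $[v_2,v_0]=v_1t$ (it is isomorphic to the Onsager algebra). For an ideal $\mathcal I$ of $\mathcal O$, $J_{\mathcal I}=\{p(t)\in k[t]: v_0p(t)+v_1p_1(t)+v_2p_2(t)\in\mathcal I\text{ for some }p_1,p_2\in k[t]\}$. For an ideal $J$ of $k[t]$, $\mathcal OJ=v_0J\oplus v_1J\oplus v_2J$, and $\mathcal OJt(t-1)=\mathcal O\,(Jt(t-1))$. *)

theory Defs
  imports "HOL-Computational_Algebra.Polynomial"
begin

text \<open>The Lie algebra O: free k[t]-module with basis v0, v1, v2; an element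
  v0 a + v1 b + v2 c is represented by the triple (a, b, c) of polynomials.\<close>

type_synonym 'a onsager = "'a poly \<times> 'a poly \<times> 'a poly"

definition ozero :: "'a::field onsager" where
  "ozero = (0, 0, 0)"

definition oadd :: "'a::field onsager \<Rightarrow> 'a onsager \<Rightarrow> 'a onsager" where
  "oadd x y = (case x of (a0, a1, a2) \<Rightarrow> case y of (b0, b1, b2) \<Rightarrow> (a0 + b0, a1 + b1, a2 + b2))"

definition osmult :: "'a::field \<Rightarrow> 'a onsager \<Rightarrow> 'a onsager" where
  "osmult c x = (case x of (a0, a1, a2) \<Rightarrow> (smult c a0, smult c a1, smult c a2))"

definition ov0 :: "'a::field poly \<Rightarrow> 'a onsager" where "ov0 p = (p, 0, 0)"
definition ov1 :: "'a::field poly \<Rightarrow> 'a onsager" where "ov1 p = (0, p, 0)"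
definition ov2 :: "'a::field poly \<Rightarrow> 'a onsager" where "ov2 p = (0, 0, p)"

text \<open>The k[t]-bilinear bracket determined by
  [v0,v1] = -v2(t-1), [v1,v2] = -v0, [v2,v0] = v1 t (and antisymmetry).\<close>
definition obracket :: "'a::field onsager \<Rightarrow> 'a onsager \<Rightarrow> 'a onsager" where
  "obracket x y = (case x of (a0, a1, a2) \<Rightarrow> case y of (b0, b1, b2) \<Rightarrow>
     (- (a1 * b2 - a2 * b1),
      [:0, 1:] * (a2 * b0 - a0 * b2),
      - ([:-1, 1:] * (a0 * b1 - a1 * b0))))"

definition is_lie_ideal :: "'a::field onsager set \<Rightarrow> bool" where
  "is_lie_ideal I \<longleftrightarrow>
     ozero \<in> I \<and>
     (\<forall>x\<in>I. \<forall>y\<in>I. oadd x y \<in> I) \<and>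
     (\<forall>c. \<forall>x\<in>I. osmult c x \<in> I) \<and>
     (\<forall>x\<in>I. \<forall>y. obracket x y \<in> I)"

definition J_of :: "'a::field onsager set \<Rightarrow> 'a poly set" where
  "J_of I = {p. \<exists>p1 p2. (p, p1, p2) \<in> I}"

definition pideal :: "'a::field poly \<Rightarrow> 'a poly set" where
  "pideal q = {q * p | p. True}"

definition OJ :: "'a::field poly set \<Rightarrow> 'a onsager set" where
  "OJ J = {(a, b, c) | a b c. a \<in> J \<and> b \<in> J \<and> c \<in> J}"

fun kspan :: "'a::field onsager list \<Rightarrow> 'a onsager set" where
  "kspan [] = {ozero}"
| "kspan (x # xs) = {oadd (osmult c x) y | c y. y \<in> kspan xs}"

definition is_direct_sum :: "'a::field onsager set \<Rightarrow> 'a onsager set \<Rightarrow> 'a onsager set \<Rightarrow> bool" where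
  "is_direct_sum I A S \<longleftrightarrow> I = {oadd a s | a s. a \<in> A \<and> s \<in> S} \<and> A \<inter> S = {ozero}"

abbreviation pt :: "'a::field poly" where "pt \<equiv> [:0, 1:]"
abbreviation ptm1 :: "'a::field poly" where "ptm1 \<equiv> [:-1, 1:]"

definition type_i :: "'a::field poly \<Rightarrow> 'a onsager set \<Rightarrow> bool" where
  "type_i q S \<longleftrightarrow> (\<exists>\<epsilon> \<delta> \<gamma> \<epsilon>' \<delta>' \<gamma>'.
     \<epsilon> \<in> {0, 1} \<and> \<delta> \<in> {0, 1} \<and> \<gamma> \<in> {0, 1} \<and> \<epsilon>' \<in> {0, 1} \<and> \<delta>' \<in> {0, 1} \<and> \<gamma>' \<in> {0, 1} \<and>
     \<epsilon> + \<delta> \<noteq> 0 \<and> \<epsilon>' + \<delta>' \<noteq> 0 \<and>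
     S = kspan
       [osmult \<epsilon> (oadd (ov0 (q * pt)) (ov1 (q * pt))),
        osmult \<delta> (oadd (ov0 (q * pt)) (osmult (-1) (ov1 (q * pt)))),
        osmult (\<epsilon> * \<delta> * \<gamma>) (ov2 (q * pt)),
        osmult \<epsilon>' (oadd (ov0 (q * ptm1)) (ov2 (q * ptm1))),
        osmult \<delta>' (oadd (ov0 (q * ptm1)) (osmult (-1) (ov2 (q * ptm1)))),
        osmult (\<epsilon>' * \<delta>' * \<gamma>') (ov1 (q * ptm1))])"

definition type_ii :: "'a::field poly \<Rightarrow> 'a onsager set \<Rightarrow> bool" where
  "type_ii q S \<longleftrightarrow> (\<exists>\<eta>. \<eta> \<noteq> 0 \<and>
     S = kspan
       [ov0 (q * pt), ov1 (q * pt), ov0 (q * ptm1), ov2 (q * ptm1),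
        oadd (ov2 (q * pt)) (osmult \<eta> (ov1 (q * ptm1)))])"

end

theory Submission
  imports Defs
begin

text \<open>Bracketing with v1 and v2 shows that every component of an element of I lies in J = q k[t],
  and two further brackets give O J t(t - 1) \<subseteq> I. Hence I is determined by a subspace W of
  k^6: the values at t = 0 and at t = 1 of the components divided by q. I is an ideal iff W is an
  ideal of the product of the two three-dimensional quotients of O at t = 0 and t = 1, and
  J_I = J iff W projects onto both v0-coordinates. In each quotient v0 and v1 commute and v2 swaps
  them (at t = 0 with v1 and v2 exchanged), so the slices of W are k(v0 + v1), k(v0 - v1),
  span{v0, v1} or everything. Either W is the product of its slices, which is type (i) (char \<noteq> 2
  is needed to write span{v0, v1} as k(v0 + v1) + k(v0 - v1)), or both slices are planes and W is
  the graph of a nonzero map from the v2-value at 1 to the v1-value at 0, which is type (ii).\<close>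

lemma two_neq_zero_if_CHAR_neq_2:
  assumes "CHAR('a::field) \<noteq> 2"
  shows "(2::'a) \<noteq> 0"
proof
  assume "(2::'a) = 0"
  then have "CHAR('a) dvd 2"
    using of_nat_eq_0_iff_char_dvd[of 2, where 'a='a] by simp
  then have "CHAR('a) \<in> {1, 2}"
    using dvd_imp_le[of "CHAR('a)" 2] by (cases "CHAR('a)") (auto simp: le_Suc_eq)
  then show False
    using assms by simp
qed

subsection \<open>Polynomials modulo t(t - 1)\<close>

text \<open>Keep the factors t and t - 1 opaque: by default the simplifier rewrites pt * p to pCons 0 p.\<close>

declare mult_pCons_left [simp del] mult_pCons_right [simp del]

lemma mem_pideal_iff: "p \<in> pideal q \<longleftrightarrow> q dvd p"
  by (auto simp: pideal_def dvd_def)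

lemma pt_ptm1_dvd_iff:
  fixes p :: "'a::field poly"
  shows "pt * ptm1 dvd p \<longleftrightarrow> poly p 0 = 0 \<and> poly p 1 = 0"
proof
  assume "poly p 0 = 0 \<and> poly p 1 = 0"
  then obtain g where g: "p = pt * g" and "poly g 1 = 0"
    using poly_eq_0_iff_dvd[of p 0] by auto
  then obtain h where "g = ptm1 * h"
    using poly_eq_0_iff_dvd[of g 1] by auto
  with g show "pt * ptm1 dvd p"
    by (metis dvd_triv_left mult.assoc)
qed auto

definition interp01 :: "'a::field \<Rightarrow> 'a \<Rightarrow> 'a poly" where
  "interp01 x y = [:x, y - x:]"

lemma poly_interp01 [simp]:
  "poly (interp01 x y) 0 = x" "poly (interp01 x y) 1 = y"
  by (simp_all add: interp01_def)

lemma interp01_add: "interp01 x y + interp01 x' y' = interp01 (x + x') (y + y')"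
  by (simp add: interp01_def algebra_simps)

lemma smult_interp01: "smult r (interp01 x y) = interp01 (r * x) (r * y)"
  by (simp add: interp01_def algebra_simps)

lemma pt_ptm1_dvd_minus_interp01: "pt * ptm1 dvd p - interp01 (poly p 0) (poly p 1)"
  unfolding pt_ptm1_dvd_iff by simp

subsection \<open>Reduction to values at 0 and 1\<close>

text \<open>W x0 x1 x2 y0 y1 y2 describes a subset of k^6: x and y are the values at t = 0 and at
  t = 1 of the three components of an element of O q, divided by q.\<close>

type_synonym 'a values6 = "'a \<Rightarrow> 'a \<Rightarrow> 'a \<Rightarrow> 'a \<Rightarrow> 'a \<Rightarrow> 'a \<Rightarrow> bool"

definition olift :: "'a::field poly \<Rightarrow> 'a \<Rightarrow> 'a \<Rightarrow> 'a \<Rightarrow> 'a \<Rightarrow> 'a \<Rightarrow> 'a \<Rightarrow> 'a onsager" where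
  "olift q x0 x1 x2 y0 y1 y2 = (q * interp01 x0 y0, q * interp01 x1 y1, q * interp01 x2 y2)"

definition lifts :: "'a::field poly \<Rightarrow> 'a values6 \<Rightarrow> 'a onsager set" where
  "lifts q W = {olift q x0 x1 x2 y0 y1 y2 | x0 x1 x2 y0 y1 y2. W x0 x1 x2 y0 y1 y2}"

definition preimage01 :: "'a::field poly \<Rightarrow> 'a values6 \<Rightarrow> 'a onsager set" where
  "preimage01 q W = {(q * a, q * b, q * c) | a b c.
     W (poly a 0) (poly b 0) (poly c 0) (poly a 1) (poly b 1) (poly c 1)}"

lemma mult_dvd_iff_factor:
  fixes q r a :: "'a::comm_semiring_1"
  shows "q * r dvd a \<longleftrightarrow> (\<exists>a'. a = q * a' \<and> r dvd a')"
  by (auto simp: mult.assoc intro: mult_dvd_mono elim!: dvdE)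

lemma mem_OJ_pideal_iff:
  "x \<in> OJ (pideal (q * pt * ptm1)) \<longleftrightarrow>
     (\<exists>a b c. x = (q * a, q * b, q * c) \<and> pt * ptm1 dvd a \<and> pt * ptm1 dvd b \<and> pt * ptm1 dvd c)"
  unfolding OJ_def mem_pideal_iff mult.assoc[of q] mult_dvd_iff_factor by blast

lemma mem_preimage01I:
  "W (poly a 0) (poly b 0) (poly c 0) (poly a 1) (poly b 1) (poly c 1) \<Longrightarrow> (q * a, q * b, q * c) \<in> preimage01 q W"
  unfolding preimage01_def by blast

lemma oadd_olift [simp]:
  "oadd (olift q x0 x1 x2 y0 y1 y2) (olift q x0' x1' x2' y0' y1' y2') =
     olift q (x0 + x0') (x1 + x1') (x2 + x2') (y0 + y0') (y1 + y1') (y2 + y2')"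
  by (simp add: olift_def oadd_def interp01_add[symmetric] distrib_left)

lemma osmult_olift [simp]:
  "osmult r (olift q x0 x1 x2 y0 y1 y2) = olift q (r * x0) (r * x1) (r * x2) (r * y0) (r * y1) (r * y2)"
  by (simp add: olift_def osmult_def smult_interp01[symmetric])

lemma oadd_kernel_olift:
  "oadd (q * (a - interp01 (poly a 0) (poly a 1)), q * (b - interp01 (poly b 0) (poly b 1)),
         q * (c - interp01 (poly c 0) (poly c 1)))
     (olift q (poly a 0) (poly b 0) (poly c 0) (poly a 1) (poly b 1) (poly c 1)) = (q * a, q * b, q * c)"
  by (simp add: oadd_def olift_def algebra_simps)

lemma OJ_plus_lifts:
  "{oadd k s | k s. k \<in> OJ (pideal (q * pt * ptm1)) \<and> s \<in> lifts q W} = preimage01 q W"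
proof (intro equalityI subsetI)
  fix u assume "u \<in> {oadd k s | k s. k \<in> OJ (pideal (q * pt * ptm1)) \<and> s \<in> lifts q W}"
  then obtain k s where u: "u = oadd k s" and k: "k \<in> OJ (pideal (q * pt * ptm1))" and s: "s \<in> lifts q W"
    by blast
  from k obtain a b c where k_eq: "k = (q * a, q * b, q * c)"
    and dvd: "pt * ptm1 dvd a" "pt * ptm1 dvd b" "pt * ptm1 dvd c"
    unfolding mem_OJ_pideal_iff by blast
  from s obtain x0 x1 x2 y0 y1 y2 where s_eq: "s = olift q x0 x1 x2 y0 y1 y2" and W: "W x0 x1 x2 y0 y1 y2"
    unfolding lifts_def by blast
  have "u = (q * (a + interp01 x0 y0), q * (b + interp01 x1 y1), q * (c + interp01 x2 y2))"
    by (simp add: u k_eq s_eq oadd_def olift_def distrib_left)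
  moreover have "poly a 0 = 0" "poly a 1 = 0" "poly b 0 = 0" "poly b 1 = 0" "poly c 0 = 0" "poly c 1 = 0"
    using dvd unfolding pt_ptm1_dvd_iff by simp_all
  ultimately show "u \<in> preimage01 q W"
    using W by (simp add: mem_preimage01I)
next
  fix u assume "u \<in> preimage01 q W"
  then obtain a b c where u: "u = (q * a, q * b, q * c)"
    and W: "W (poly a 0) (poly b 0) (poly c 0) (poly a 1) (poly b 1) (poly c 1)"
    unfolding preimage01_def by blast
  let ?k = "(q * (a - interp01 (poly a 0) (poly a 1)), q * (b - interp01 (poly b 0) (poly b 1)),
             q * (c - interp01 (poly c 0) (poly c 1)))"
  let ?s = "olift q (poly a 0) (poly b 0) (poly c 0) (poly a 1) (poly b 1) (poly c 1)"
  have "?k \<in> OJ (pideal (q * pt * ptm1))"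
    unfolding mem_OJ_pideal_iff by (intro exI conjI, rule refl) (rule pt_ptm1_dvd_minus_interp01)+
  moreover have "?s \<in> lifts q W"
    using W unfolding lifts_def by blast
  moreover have "u = oadd ?k ?s"
    unfolding u by (rule oadd_kernel_olift[symmetric])
  ultimately show "u \<in> {oadd k s | k s. k \<in> OJ (pideal (q * pt * ptm1)) \<and> s \<in> lifts q W}"
    by blast
qed

lemma OJ_inter_lifts:
  assumes "q \<noteq> 0" and "W 0 0 0 0 0 0"
  shows "OJ (pideal (q * pt * ptm1)) \<inter> lifts q W = {ozero}"
proof (intro equalityI subsetI)
  fix u assume "u \<in> OJ (pideal (q * pt * ptm1)) \<inter> lifts q W"
  then obtain a b c x0 x1 x2 y0 y1 y2
    where u: "u = (q * a, q * b, q * c)" "u = olift q x0 x1 x2 y0 y1 y2"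
      and dvd: "pt * ptm1 dvd a" "pt * ptm1 dvd b" "pt * ptm1 dvd c"
    unfolding Int_iff mem_OJ_pideal_iff lifts_def by blast
  then have "a = interp01 x0 y0" "b = interp01 x1 y1" "c = interp01 x2 y2"
    using assms(1) by (simp_all add: olift_def)
  with dvd have "x0 = 0" "x1 = 0" "x2 = 0" "y0 = 0" "y1 = 0" "y2 = 0"
    unfolding pt_ptm1_dvd_iff by simp_all
  then show "u \<in> {ozero}"
    using u by (simp add: olift_def interp01_def ozero_def)
next
  have "ozero = (q * 0, q * 0, q * 0)" "ozero = olift q 0 0 0 0 0 0"
    by (simp_all add: olift_def interp01_def ozero_def)
  then show "u \<in> OJ (pideal (q * pt * ptm1)) \<inter> lifts q W" if "u \<in> {ozero}" for u
    using that assms(2) unfolding Int_iff mem_OJ_pideal_iff lifts_def by blast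
qed

lemma direct_sum_lifts_iff:
  assumes "q \<noteq> 0" and "W 0 0 0 0 0 0"
  shows "is_direct_sum I (OJ (pideal (q * pt * ptm1))) (lifts q W) \<longleftrightarrow> I = preimage01 q W"
  unfolding is_direct_sum_def OJ_plus_lifts using OJ_inter_lifts[of q W] assms by blast

subsection \<open>Ideals of O as ideals of values\<close>

text \<open>The bracket condition is the bracket of O read off at t = 0 and at t = 1; the last
  assumption expresses J_I = q k[t].\<close>

locale value_ideal =
  fixes W :: "'a::field values6"
  assumes zero: "W 0 0 0 0 0 0"
    and add: "W x0 x1 x2 y0 y1 y2 \<Longrightarrow> W x0' x1' x2' y0' y1' y2' \<Longrightarrow>
      W (x0 + x0') (x1 + x1') (x2 + x2') (y0 + y0') (y1 + y1') (y2 + y2')"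
    and smult: "W x0 x1 x2 y0 y1 y2 \<Longrightarrow> W (r * x0) (r * x1) (r * x2) (r * y0) (r * y1) (r * y2)"
    and bracket: "W x0 x1 x2 y0 y1 y2 \<Longrightarrow>
      W (x2 * g - x1 * h) 0 (x0 * g - x1 * f) (y2 * g' - y1 * h') (y2 * f' - y0 * h') 0"
    and surj: "\<exists>x1 x2 y1 y2. W x0 x1 x2 y0 y1 y2"

lemma obracket_mult_left:
  "obracket (q * a, q * b, q * c) (f, g, h) =
     (q * (c * g - b * h), q * (pt * (c * f - a * h)), q * (ptm1 * (b * f - a * g)))"
  by (simp add: obracket_def algebra_simps)

lemma (in value_ideal) lie_ideal_preimage01: "is_lie_ideal (preimage01 q W)"
  unfolding is_lie_ideal_def
proof (intro conjI ballI allI)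
  show "ozero \<in> preimage01 q W"
    using mem_preimage01I[of W 0 0 0 q] zero by (simp add: ozero_def)
next
  fix x y assume "x \<in> preimage01 q W" "y \<in> preimage01 q W"
  then obtain a b c a' b' c' where "x = (q * a, q * b, q * c)" "y = (q * a', q * b', q * c')"
    and "W (poly a 0) (poly b 0) (poly c 0) (poly a 1) (poly b 1) (poly c 1)"
      "W (poly a' 0) (poly b' 0) (poly c' 0) (poly a' 1) (poly b' 1) (poly c' 1)"
    unfolding preimage01_def by blast
  then show "oadd x y \<in> preimage01 q W"
    using mem_preimage01I[of W "a + a'" "b + b'" "c + c'" q] add by (simp add: oadd_def distrib_left)
next
  fix r x assume "x \<in> preimage01 q W"
  then obtain a b c where "x = (q * a, q * b, q * c)"
    and "W (poly a 0) (poly b 0) (poly c 0) (poly a 1) (poly b 1) (poly c 1)"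
    unfolding preimage01_def by blast
  then show "osmult r x \<in> preimage01 q W"
    using mem_preimage01I[of W "smult r a" "smult r b" "smult r c" q] smult by (simp add: osmult_def)
next
  fix x y :: "'a onsager" assume "x \<in> preimage01 q W"
  then obtain a b c where x: "x = (q * a, q * b, q * c)"
    and "W (poly a 0) (poly b 0) (poly c 0) (poly a 1) (poly b 1) (poly c 1)"
    unfolding preimage01_def by blast
  moreover obtain f g h where y: "y = (f, g, h)"
    by (cases y)
  ultimately show "obracket x y \<in> preimage01 q W"
    unfolding x y obracket_mult_left
    by (intro mem_preimage01I) (simp add: algebra_simps, erule bracket)
qed

lemma (in value_ideal) J_of_preimage01: "J_of (preimage01 q W) = pideal q"
proof (intro equalityI subsetI)
  fix p assume "p \<in> J_of (preimage01 q W)"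
  then show "p \<in> pideal q"
    unfolding J_of_def preimage01_def pideal_def by blast
next
  fix p assume "p \<in> pideal q"
  then obtain r where p: "p = q * r"
    unfolding pideal_def by blast
  obtain x1 x2 y1 y2 where "W (poly r 0) x1 x2 (poly r 1) y1 y2"
    using surj by blast
  then have "(q * r, q * interp01 x1 y1, q * interp01 x2 y2) \<in> preimage01 q W"
    by (intro mem_preimage01I) simp
  then show "p \<in> J_of (preimage01 q W)"
    unfolding J_of_def p by blast
qed

lemma is_lie_idealD:
  assumes "is_lie_ideal I"
  shows "ozero \<in> I" and "x \<in> I \<Longrightarrow> y \<in> I \<Longrightarrow> oadd x y \<in> I"
    and "x \<in> I \<Longrightarrow> osmult r x \<in> I" and "x \<in> I \<Longrightarrow> obracket x y \<in> I"
  using assms unfolding is_lie_ideal_def by blast+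

lemma lie_ideal_dvd_components:
  assumes I: "is_lie_ideal I" and J: "J_of I = pideal q" and x: "(a, b, c) \<in> I"
  shows "q dvd a \<and> q dvd b \<and> q dvd c"
proof -
  have first: "q dvd p" if "(p, p1, p2) \<in> I" for p p1 p2
    using that J unfolding J_of_def mem_pideal_iff[symmetric] by blast
  have "obracket (a, b, c) (0, 1, 0) = (c, 0, - (ptm1 * a))"
    "obracket (a, b, c) (0, 0, 1) = (- b, - (pt * a), 0)"
    by (simp_all add: obracket_def)
  moreover have "obracket (a, b, c) (0, 1, 0) \<in> I" "obracket (a, b, c) (0, 0, 1) \<in> I"
    using is_lie_idealD(4)[OF I x] by blast+
  ultimately have "q dvd c" "q dvd - b"
    using first by metis+
  then show ?thesis
    using first[OF x] by simp
qed

lemma OJ_subset_lie_ideal: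
  assumes I: "is_lie_ideal I" and J: "J_of I = pideal q"
  shows "OJ (pideal (q * pt * ptm1)) \<subseteq> I"
proof
  have basis: "(q * pt * ptm1 * r, 0, 0) \<in> I \<and> (0, q * pt * ptm1 * r, 0) \<in> I \<and> (0, 0, q * pt * ptm1 * r) \<in> I"
    for r
  proof -
    have "q * r \<in> J_of I"
      using J by (simp add: mem_pideal_iff)
    then obtain p1 p2 where x: "(q * r, p1, p2) \<in> I"
      unfolding J_of_def by blast
    have "osmult (-1) (obracket (obracket (q * r, p1, p2) (0, 1, 0)) (1, 0, 0)) = (0, q * pt * ptm1 * r, 0)"
      "osmult (-1) (obracket (obracket (q * r, p1, p2) (0, 0, 1)) (1, 0, 0)) = (0, 0, q * pt * ptm1 * r)"
      "obracket (0, 0, q * pt * ptm1 * r) (0, 1, 0) = (q * pt * ptm1 * r, 0, 0)"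
      by (simp_all add: obracket_def osmult_def algebra_simps)
    then show ?thesis
      using is_lie_idealD(3,4)[OF I] x by metis
  qed
  fix x assume "x \<in> OJ (pideal (q * pt * ptm1))"
  then obtain r1 r2 r3 where "x = oadd (q * pt * ptm1 * r1, 0, 0) (oadd (0, q * pt * ptm1 * r2, 0) (0, 0, q * pt * ptm1 * r3))"
    unfolding OJ_def pideal_def by (auto simp: oadd_def)
  then show "x \<in> I"
    using basis is_lie_idealD(2)[OF I] by metis
qed

definition values01 :: "'a::field poly \<Rightarrow> 'a onsager set \<Rightarrow> 'a values6" where
  "values01 q I x0 x1 x2 y0 y1 y2 \<longleftrightarrow> (\<exists>a b c. (q * a, q * b, q * c) \<in> I \<and>
     x0 = poly a 0 \<and> x1 = poly b 0 \<and> x2 = poly c 0 \<and> y0 = poly a 1 \<and> y1 = poly b 1 \<and> y2 = poly c 1)"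

lemma values01I:
  "(q * a, q * b, q * c) \<in> I \<Longrightarrow> values01 q I (poly a 0) (poly b 0) (poly c 0) (poly a 1) (poly b 1) (poly c 1)"
  unfolding values01_def by blast

lemma preimage01_values01:
  assumes I: "is_lie_ideal I" and J: "J_of I = pideal q"
  shows "preimage01 q (values01 q I) = I"
proof (intro equalityI subsetI)
  fix x assume "x \<in> preimage01 q (values01 q I)"
  then obtain a b c a' b' c' where x: "x = (q * a, q * b, q * c)" and x': "(q * a', q * b', q * c') \<in> I"
    and vals: "poly a 0 = poly a' 0" "poly b 0 = poly b' 0" "poly c 0 = poly c' 0"
      "poly a 1 = poly a' 1" "poly b 1 = poly b' 1" "poly c 1 = poly c' 1"
    unfolding preimage01_def values01_def by blast
  have "(q * (a - a'), q * (b - b'), q * (c - c')) \<in> OJ (pideal (q * pt * ptm1))"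
    unfolding mem_OJ_pideal_iff pt_ptm1_dvd_iff by (intro exI conjI, rule refl) (simp_all add: vals)
  then have "oadd (q * (a - a'), q * (b - b'), q * (c - c')) (q * a', q * b', q * c') \<in> I"
    using OJ_subset_lie_ideal[OF I J] x' is_lie_idealD(2)[OF I] by blast
  then show "x \<in> I"
    unfolding x by (simp add: oadd_def right_diff_distrib)
next
  fix x assume x: "x \<in> I"
  obtain a b c where "x = (a, b, c)"
    by (cases x)
  moreover from this have "q dvd a" "q dvd b" "q dvd c"
    using lie_ideal_dvd_components[OF I J] x by blast+
  ultimately obtain a' b' c' where "x = (q * a', q * b', q * c')"
    unfolding dvd_def by blast
  then show "x \<in> preimage01 q (values01 q I)"
    using x by (auto intro!: mem_preimage01I values01I)
qed

lemma values01_bracket: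
  assumes I: "is_lie_ideal I" and "values01 q I x0 x1 x2 y0 y1 y2"
  shows "values01 q I (x2 * g - x1 * h) 0 (x0 * g - x1 * f) (y2 * g' - y1 * h') (y2 * f' - y0 * h') 0"
proof -
  obtain a b c where x: "(q * a, q * b, q * c) \<in> I"
    and vals: "x0 = poly a 0" "x1 = poly b 0" "x2 = poly c 0" "y0 = poly a 1" "y1 = poly b 1" "y2 = poly c 1"
    using assms(2) unfolding values01_def by blast
  define F G H where "F = interp01 f f'" and "G = interp01 g g'" and "H = interp01 h h'"
  have "obracket (q * a, q * b, q * c) (F, G, H) \<in> I"
    using is_lie_idealD(4)[OF I x] .
  then have "values01 q I (poly (c * G - b * H) 0) (poly (pt * (c * F - a * H)) 0) (poly (ptm1 * (b * F - a * G)) 0)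
      (poly (c * G - b * H) 1) (poly (pt * (c * F - a * H)) 1) (poly (ptm1 * (b * F - a * G)) 1)"
    unfolding obracket_mult_left by (rule values01I)
  then show ?thesis
    by (simp add: vals F_def G_def H_def algebra_simps)
qed

lemma values01_surj:
  assumes I: "is_lie_ideal I" and J: "J_of I = pideal q"
  shows "\<exists>x1 x2 y1 y2. values01 q I x0 x1 x2 y0 y1 y2"
proof -
  have "q * interp01 x0 y0 \<in> J_of I"
    using J by (simp add: mem_pideal_iff)
  then obtain b c where x: "(q * interp01 x0 y0, b, c) \<in> I"
    unfolding J_of_def by blast
  then obtain b' c' where "b = q * b'" "c = q * c'"
    using lie_ideal_dvd_components[OF I J] unfolding dvd_def by blast
  then show ?thesis
    using values01I[of q "interp01 x0 y0" b' c' I] x by auto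
qed

lemma value_ideal_values01:
  assumes I: "is_lie_ideal I" and J: "J_of I = pideal q"
  shows "value_ideal (values01 q I)"
proof
  show "values01 q I 0 0 0 0 0 0"
    using is_lie_idealD(1)[OF I] values01I[of q 0 0 0 I] by (simp add: ozero_def)
next
  fix x0 x1 x2 y0 y1 y2 x0' x1' x2' y0' y1' y2'
  assume "values01 q I x0 x1 x2 y0 y1 y2" "values01 q I x0' x1' x2' y0' y1' y2'"
  then obtain a b c a' b' c' where x: "(q * a, q * b, q * c) \<in> I" and y: "(q * a', q * b', q * c') \<in> I"
    and "x0 = poly a 0" "x1 = poly b 0" "x2 = poly c 0" "y0 = poly a 1" "y1 = poly b 1" "y2 = poly c 1"
    and "x0' = poly a' 0" "x1' = poly b' 0" "x2' = poly c' 0" "y0' = poly a' 1" "y1' = poly b' 1" "y2' = poly c' 1"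
    unfolding values01_def by blast
  moreover have "oadd (q * a, q * b, q * c) (q * a', q * b', q * c') \<in> I"
    using is_lie_idealD(2)[OF I x y] .
  ultimately show "values01 q I (x0 + x0') (x1 + x1') (x2 + x2') (y0 + y0') (y1 + y1') (y2 + y2')"
    by (auto dest!: values01I simp: oadd_def distrib_left[symmetric])
next
  fix x0 x1 x2 y0 y1 y2 r
  assume "values01 q I x0 x1 x2 y0 y1 y2"
  then obtain a b c where x: "(q * a, q * b, q * c) \<in> I"
    and "x0 = poly a 0" "x1 = poly b 0" "x2 = poly c 0" "y0 = poly a 1" "y1 = poly b 1" "y2 = poly c 1"
    unfolding values01_def by blast
  moreover have "(q * smult r a, q * smult r b, q * smult r c) \<in> I"
    using is_lie_idealD(3)[OF I x] by (simp add: osmult_def)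
  ultimately show "values01 q I (r * x0) (r * x1) (r * x2) (r * y0) (r * y1) (r * y2)"
    using values01I[of q "smult r a" "smult r b" "smult r c" I] by simp
qed (fact values01_bracket[OF I] values01_surj[OF I J])+

lemma lie_ideal_iff_value_ideal:
  "(is_lie_ideal I \<and> J_of I = pideal q) \<longleftrightarrow> (\<exists>W. value_ideal W \<and> I = preimage01 q W)"
  using preimage01_values01 value_ideal_values01
    value_ideal.lie_ideal_preimage01 value_ideal.J_of_preimage01 by metis

subsection \<open>Ideals of the three-dimensional quotients\<close>

datatype slice_kind = Plus | Minus | Both | Full

fun slice_mem :: "slice_kind \<Rightarrow> 'a::field \<Rightarrow> 'a \<Rightarrow> 'a \<Rightarrow> bool" where
  "slice_mem Plus a b c \<longleftrightarrow> b = a \<and> c = 0"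
| "slice_mem Minus a b c \<longleftrightarrow> b = - a \<and> c = 0"
| "slice_mem Both a b c \<longleftrightarrow> c = 0"
| "slice_mem Full a b c \<longleftrightarrow> True"

text \<open>Y is the set of values at one of the points 0, 1 of those elements of a value ideal that
  vanish at the other point, and P the set of all values at that point. In the bracket of the
  quotient at that point, v0 and v1 commute and v2 swaps them.\<close>

locale slice =
  fixes Y P :: "'a::field \<Rightarrow> 'a \<Rightarrow> 'a \<Rightarrow> bool"
  assumes add: "Y a b c \<Longrightarrow> Y a' b' c' \<Longrightarrow> Y (a + a') (b + b') (c + c')"
    and smult: "Y a b c \<Longrightarrow> Y (r * a) (r * b) (r * c)"
    and Y_imp_P: "Y a b c \<Longrightarrow> P a b c"
    and bracket: "P a b c \<Longrightarrow> Y (c * g - b * h) (c * f - a * h) 0"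
    and P_onto_first: "\<exists>s t. P 1 s t"
begin

lemma diff: "Y a b c \<Longrightarrow> Y a' b' c' \<Longrightarrow> Y (a - a') (b - b') (c - c')"
  using add[of a b c "- a'" "- b'" "- c'"] smult[of a' b' c' "- 1"] by simp

lemma diagonal:
  obtains s where "Y 1 s 0" and "Y s 1 0"
proof -
  obtain s t where "P 1 s t"
    using P_onto_first by blast
  from bracket[OF this, where f = 0 and g = 0 and h = 1] have "Y (- s) (- 1) 0"
    by simp
  moreover from bracket[OF Y_imp_P[OF this], where f = 0 and g = 0 and h = 1] have "Y 1 s 0"
    by simp
  ultimately show thesis
    using that smult[of "- s" "- 1" 0 "- 1"] by simp
qed

lemma plane_cases:
  assumes "Y 1 0 0" and "Y 0 1 0"
  shows "Y = slice_mem Both \<or> Y = slice_mem Full"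
proof -
  have plane: "Y a b 0" for a b
    using add[OF smult[OF assms(1), of a] smult[OF assms(2), of b]] by simp
  show ?thesis
  proof (cases "Y 0 0 1")
    case True
    then have "Y a b c" for a b c
      using add[OF plane[of a b] smult[OF True, of c]] by simp
    then show ?thesis
      by (auto intro!: ext)
  next
    case False
    have "c = 0" if "Y a b c" for a b c
    proof (rule ccontr)
      assume "c \<noteq> 0"
      with diff[OF that plane[of a b]] smult[of 0 0 c "1 / c"] have "Y 0 0 1"
        by simp
      with False show False ..
    qed
    then show ?thesis
      using plane by (auto intro!: ext)
  qed
qed

lemma P_third_zero:
  assumes "\<not> (Y 1 0 0 \<and> Y 0 1 0)" and "P a b c"
  shows "c = 0"
proof (rule ccontr)
  assume "c \<noteq> 0"
  then have "Y 1 0 0" "Y 0 1 0"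
    using bracket[OF assms(2), where f = 0 and g = "1 / c" and h = 0]
      bracket[OF assms(2), where f = "1 / c" and g = 0 and h = 0] by simp_all
  with assms(1) show False
    by blast
qed

lemma P_imp_Y:
  assumes "\<not> (Y 1 0 0 \<and> Y 0 1 0)" and "P a b c"
  shows "Y a b c"
proof -
  from bracket[OF assms(2), where f = 0 and g = 0 and h = "- 1"] have "Y b a 0"
    by simp
  from bracket[OF Y_imp_P[OF this], where f = 0 and g = 0 and h = "- 1"] have "Y a b 0"
    by simp
  then show ?thesis
    using P_third_zero[OF assms] by simp
qed

lemma line_cases:
  assumes not_plane: "\<not> (Y 1 0 0 \<and> Y 0 1 0)"
  shows "Y = slice_mem Plus \<or> Y = slice_mem Minus"
proof -
  obtain s where s: "Y 1 s 0" "Y s 1 0"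
    by (rule diagonal)
  have line: "Y a b c \<longleftrightarrow> b = s * a \<and> c = 0" for a b c
  proof
    assume abc: "Y a b c"
    have "c = 0"
      using P_third_zero[OF not_plane Y_imp_P[OF abc]] .
    moreover have "b = s * a"
    proof (rule ccontr)
      assume "b \<noteq> s * a"
      with diff[OF abc smult[OF s(1), of a]] \<open>c = 0\<close> smult[of 0 "b - s * a" 0 "1 / (b - s * a)"]
      have e1: "Y 0 1 0"
        by (simp add: algebra_simps)
      with diff[OF s(1) smult[OF e1, of s]] have "Y 1 0 0"
        by simp
      with e1 not_plane show False
        by blast
    qed
    ultimately show "b = s * a \<and> c = 0"
      by blast
  next
    assume "b = s * a \<and> c = 0"
    then show "Y a b c"
      using smult[OF s(1), of a] by (simp add: mult.commute)
  qed
  then have "s * s = 1"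
    using s(2) by simp
  then have "s = 1 \<or> s = - 1"
    by (simp add: square_eq_1_iff)
  then show ?thesis
    using line by (auto intro!: ext)
qed

lemma classification: "\<exists>k. Y = slice_mem k \<and> (k \<noteq> Both \<longrightarrow> (\<forall>a b c. P a b c \<longrightarrow> Y a b c))"
proof (cases "Y 1 0 0 \<and> Y 0 1 0")
  case True
  then have "Y = slice_mem Both \<or> Y = slice_mem Full"
    using plane_cases by blast
  moreover have "\<forall>a b c. P a b c \<longrightarrow> slice_mem Full a b c"
    by simp
  ultimately show ?thesis
    by blast
next
  case False
  then show ?thesis
    using line_cases P_imp_Y by blast
qed

end

subsection \<open>Classification of value ideals\<close>

text \<open>At t = 0 the roles of v1 and v2 are exchanged, whence the order x0 x2 x1.\<close>

definition product_values :: "slice_kind \<Rightarrow> slice_kind \<Rightarrow> 'a::field values6" where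
  "product_values k0 k1 x0 x1 x2 y0 y1 y2 \<longleftrightarrow> slice_mem k0 x0 x2 x1 \<and> slice_mem k1 y0 y1 y2"

definition graph_values :: "'a::field \<Rightarrow> 'a values6" where
  "graph_values \<eta> x0 x1 x2 y0 y1 y2 \<longleftrightarrow> x1 = - \<eta> * y2"

context value_ideal
begin

lemma diff:
  "W x0 x1 x2 y0 y1 y2 \<Longrightarrow> W x0' x1' x2' y0' y1' y2' \<Longrightarrow>
     W (x0 - x0') (x1 - x1') (x2 - x2') (y0 - y0') (y1 - y1') (y2 - y2')"
  using add smult[of x0' x1' x2' y0' y1' y2' "- 1"] by fastforce

lemma slice_at_1: "slice (\<lambda>a b c. W 0 0 0 a b c) (\<lambda>a b c. \<exists>x0 x1 x2. W x0 x1 x2 a b c)"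
proof
  show "W 0 0 0 (c * g - b * h) (c * f - a * h) 0" if "\<exists>x0 x1 x2. W x0 x1 x2 a b c" for a b c f g h
    using that bracket[where f = 0 and g = 0 and h = 0 and f' = f and g' = g and h' = h] by fastforce
  show "\<exists>s t x0 x1 x2. W x0 x1 x2 1 s t"
    using surj[of 0 1] by blast
qed (use add smult in \<open>fastforce+\<close>)

lemma slice_at_0: "slice (\<lambda>a b c. W a c b 0 0 0) (\<lambda>a b c. \<exists>y0 y1 y2. W a c b y0 y1 y2)"
proof
  show "W (c * g - b * h) 0 (c * f - a * h) 0 0 0" if "\<exists>y0 y1 y2. W a c b y0 y1 y2" for a b c f g h
    using that bracket[where f = "- f" and g = "- h" and h = "- g" and f' = 0 and g' = 0 and h' = 0]
    by (fastforce simp: algebra_simps)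
  show "\<exists>s t y0 y1 y2. W 1 t s y0 y1 y2"
    using surj[of 1 0] by blast
qed (use add smult in \<open>fastforce+\<close>)

lemma product_case:
  assumes "\<And>x0 x1 x2 y0 y1 y2. W x0 x1 x2 y0 y1 y2 \<Longrightarrow> W 0 0 0 y0 y1 y2"
  shows "\<exists>k0 k1. W = product_values k0 k1"
proof -
  obtain k0 where "(\<lambda>a b c. W a c b 0 0 0) = slice_mem k0"
    using slice.classification[OF slice_at_0] by blast
  then have k0: "W a c b 0 0 0 \<longleftrightarrow> slice_mem k0 a b c" for a b c
    by (simp add: fun_eq_iff)
  obtain k1 where "(\<lambda>a b c. W 0 0 0 a b c) = slice_mem k1"
    using slice.classification[OF slice_at_1] by blast
  then have k1: "W 0 0 0 a b c \<longleftrightarrow> slice_mem k1 a b c" for a b c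
    by (simp add: fun_eq_iff)
  have "W x0 x1 x2 y0 y1 y2 \<longleftrightarrow> W x0 x1 x2 0 0 0 \<and> W 0 0 0 y0 y1 y2" for x0 x1 x2 y0 y1 y2
    using assms diff[of x0 x1 x2 y0 y1 y2 0 0 0] add[of x0 x1 x2 0 0 0 0 0 0] by fastforce
  also have "\<dots> x0 x1 x2 y0 y1 y2 \<longleftrightarrow> product_values k0 k1 x0 x1 x2 y0 y1 y2" for x0 x1 x2 y0 y1 y2
    by (simp add: product_values_def k0 k1)
  finally show ?thesis
    by blast
qed

lemma non_product_x_part:
  assumes U: "W u0 u1 u2 v0 v1 v2" and not_Y: "\<not> W 0 0 0 v0 v1 v2"
  shows "\<not> W u0 u1 u2 0 0 0"
proof
  assume "W u0 u1 u2 0 0 0"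
  from diff[OF U this] not_Y show False
    by simp
qed

lemma non_product_slices:
  assumes U: "W u0 u1 u2 v0 v1 v2" and not_Y: "\<not> W 0 0 0 v0 v1 v2"
  shows "W 0 0 0 y0 y1 y2 \<longleftrightarrow> y2 = 0" and "W x0 x1 x2 0 0 0 \<longleftrightarrow> x1 = 0"
proof -
  obtain k1 where k1: "(\<lambda>a b c. W 0 0 0 a b c) = slice_mem k1"
    and P1: "k1 \<noteq> Both \<longrightarrow> (\<forall>a b c. (\<exists>x0 x1 x2. W x0 x1 x2 a b c) \<longrightarrow> W 0 0 0 a b c)"
    using slice.classification[OF slice_at_1] by blast
  have "k1 = Both"
  proof (rule ccontr)
    assume "k1 \<noteq> Both"
    with P1 U have "W 0 0 0 v0 v1 v2"
      by blast
    with not_Y show False ..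
  qed
  with k1 show "W 0 0 0 y0 y1 y2 \<longleftrightarrow> y2 = 0"
    by (simp add: fun_eq_iff)
  obtain k0 where k0: "(\<lambda>a b c. W a c b 0 0 0) = slice_mem k0"
    and P0: "k0 \<noteq> Both \<longrightarrow> (\<forall>a b c. (\<exists>y0 y1 y2. W a c b y0 y1 y2) \<longrightarrow> W a c b 0 0 0)"
    using slice.classification[OF slice_at_0] by blast
  have "k0 = Both"
  proof (rule ccontr)
    assume "k0 \<noteq> Both"
    with P0 U have "W u0 u1 u2 0 0 0"
      by blast
    with non_product_x_part[OF U not_Y] show False ..
  qed
  with k0 show "W x0 x1 x2 0 0 0 \<longleftrightarrow> x1 = 0"
    by (simp add: fun_eq_iff)
qed

lemma graph_case:
  assumes U: "W u0 u1 u2 v0 v1 v2" and not_Y: "\<not> W 0 0 0 v0 v1 v2"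
  shows "\<exists>\<eta>. \<eta> \<noteq> 0 \<and> W = graph_values \<eta>"
proof -
  note Y = non_product_slices(1)[OF U not_Y] and X = non_product_slices(2)[OF U not_Y]
  have "v2 \<noteq> 0"
    using not_Y Y by blast
  have "u1 \<noteq> 0"
    using non_product_x_part[OF U not_Y] X by blast
  define \<eta> where "\<eta> = - u1 / v2"
  have "W x0 x1 x2 y0 y1 y2 \<longleftrightarrow> graph_values \<eta> x0 x1 x2 y0 y1 y2" for x0 x1 x2 y0 y1 y2
  proof -
    define l where "l = y2 / v2"
    have Ul: "W (l * u0) (l * u1) (l * u2) (l * v0) (l * v1) (l * v2)"
      using smult[OF U] .
    have Yl: "W 0 0 0 (y0 - l * v0) (y1 - l * v1) (y2 - l * v2)"
      using Y \<open>v2 \<noteq> 0\<close> by (simp add: l_def)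
    have "W x0 x1 x2 y0 y1 y2 \<longleftrightarrow> W (x0 - l * u0) (x1 - l * u1) (x2 - l * u2) 0 0 0"
    proof
      assume "W x0 x1 x2 y0 y1 y2"
      from diff[OF diff[OF this Ul] Yl] show "W (x0 - l * u0) (x1 - l * u1) (x2 - l * u2) 0 0 0"
        by simp
    next
      assume "W (x0 - l * u0) (x1 - l * u1) (x2 - l * u2) 0 0 0"
      from add[OF add[OF this Yl] Ul] show "W x0 x1 x2 y0 y1 y2"
        by simp
    qed
    also have "\<dots> \<longleftrightarrow> graph_values \<eta> x0 x1 x2 y0 y1 y2"
      using X \<open>v2 \<noteq> 0\<close> by (simp add: graph_values_def l_def \<eta>_def field_simps)
    finally show ?thesis .
  qed
  moreover have "\<eta> \<noteq> 0"
    using \<open>u1 \<noteq> 0\<close> \<open>v2 \<noteq> 0\<close> by (simp add: \<eta>_def)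
  ultimately show ?thesis
    by blast
qed

lemma classification: "(\<exists>k0 k1. W = product_values k0 k1) \<or> (\<exists>\<eta>. \<eta> \<noteq> 0 \<and> W = graph_values \<eta>)"
proof (cases "\<forall>x0 x1 x2 y0 y1 y2. W x0 x1 x2 y0 y1 y2 \<longrightarrow> W 0 0 0 y0 y1 y2")
  case True
  then show ?thesis
    using product_case by blast
next
  case False
  then show ?thesis
    using graph_case by blast
qed

end

lemma slice_mem_slice: "slice (slice_mem k) (slice_mem k)"
proof
  show "\<exists>s t. slice_mem k 1 s t"
    by (cases k) auto
qed (cases k; auto simp: algebra_simps)+

lemma value_ideal_product_values: "value_ideal (product_values k0 k1 :: 'a::field values6)"
proof -
  interpret at_0: slice "slice_mem k0 :: 'a \<Rightarrow> 'a \<Rightarrow> 'a \<Rightarrow> bool" "slice_mem k0"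
    by (rule slice_mem_slice)
  interpret at_1: slice "slice_mem k1 :: 'a \<Rightarrow> 'a \<Rightarrow> 'a \<Rightarrow> bool" "slice_mem k1"
    by (rule slice_mem_slice)
  show ?thesis
  proof
    show "product_values k0 k1 0 0 0 0 0 0"
      by (cases k0; cases k1) (simp_all add: product_values_def)
  next
    fix x0 x1 x2 y0 y1 y2 :: 'a and f g h f' g' h'
    assume "product_values k0 k1 x0 x1 x2 y0 y1 y2"
    then have x: "slice_mem k0 x0 x2 x1" and y: "slice_mem k1 y0 y1 y2"
      by (simp_all add: product_values_def)
    from at_0.bracket[OF x, where f = "- f" and g = "- h" and h = "- g"]
    have "slice_mem k0 (x2 * g - x1 * h) (x0 * g - x1 * f) 0"
      by (simp add: algebra_simps)
    moreover have "slice_mem k1 (y2 * g' - y1 * h') (y2 * f' - y0 * h') 0"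
      by (rule at_1.bracket[OF y])
    ultimately show "product_values k0 k1 (x2 * g - x1 * h) 0 (x0 * g - x1 * f) (y2 * g' - y1 * h') (y2 * f' - y0 * h') 0"
      by (simp add: product_values_def)
  next
    fix x0 y0 :: 'a
    obtain s t s' t' :: 'a where "slice_mem k0 1 s t" "slice_mem k1 1 s' t'"
      using at_0.P_onto_first at_1.P_onto_first by blast
    then show "\<exists>x1 x2 y1 y2. product_values k0 k1 x0 x1 x2 y0 y1 y2"
      using at_0.smult[of 1 s t x0] at_1.smult[of 1 s' t' y0] by (auto simp: product_values_def)
  qed (auto simp: product_values_def intro: at_0.add at_1.add at_0.smult at_1.smult)
qed

lemma value_ideal_graph_values: "value_ideal (graph_values \<eta>)"
  by unfold_locales (auto simp: graph_values_def algebra_simps)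

subsection \<open>The subspaces of types (i) and (ii)\<close>

lemma ov_olift:
  "ov0 (q * pt) = olift q 0 0 0 1 0 0" "ov1 (q * pt) = olift q 0 0 0 0 1 0"
  "ov2 (q * pt) = olift q 0 0 0 0 0 1" "ov0 (q * ptm1) = olift q (- 1) 0 0 0 0 0"
  "ov1 (q * ptm1) = olift q 0 (- 1) 0 0 0 0" "ov2 (q * ptm1) = olift q 0 0 (- 1) 0 0 0"
  by (simp_all add: ov0_def ov1_def ov2_def olift_def interp01_def)

lemma oadd_ozero [simp]: "oadd x ozero = x"
  by (cases x) (simp add: oadd_def ozero_def)

lemma kspan_ConsI: "y \<in> kspan xs \<Longrightarrow> oadd (osmult c x) y \<in> kspan (x # xs)"
  unfolding kspan.simps by blast

lemma kspan_type_ii: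
  "kspan [ov0 (q * pt), ov1 (q * pt), ov0 (q * ptm1), ov2 (q * ptm1),
     oadd (ov2 (q * pt)) (osmult \<eta> (ov1 (q * ptm1)))] = lifts q (graph_values \<eta>)"
  (is "kspan [?g1, ?g2, ?g3, ?g4, ?g5] = _")
proof (intro equalityI subsetI)
  fix u assume "u \<in> kspan [?g1, ?g2, ?g3, ?g4, ?g5]"
  then obtain c1 c2 c3 c4 c5 where "u = oadd (osmult c1 ?g1) (oadd (osmult c2 ?g2)
      (oadd (osmult c3 ?g3) (oadd (osmult c4 ?g4) (oadd (osmult c5 ?g5) ozero))))"
    by auto
  then have "u = olift q (- c3) (- \<eta> * c5) (- c4) c1 c2 c5"
    by (simp add: ov_olift mult.commute)
  then show "u \<in> lifts q (graph_values \<eta>)"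
    unfolding lifts_def graph_values_def by blast
next
  fix u assume "u \<in> lifts q (graph_values \<eta>)"
  then obtain x0 x2 y0 y1 y2 where "u = olift q x0 (- \<eta> * y2) x2 y0 y1 y2"
    unfolding lifts_def graph_values_def by blast
  then have "u = oadd (osmult y0 ?g1) (oadd (osmult y1 ?g2)
      (oadd (osmult (- x0) ?g3) (oadd (osmult (- x2) ?g4) (oadd (osmult y2 ?g5) ozero))))"
    by (simp add: ov_olift mult.commute)
  then show "u \<in> kspan [?g1, ?g2, ?g3, ?g4, ?g5]"
    by (simp only: kspan_ConsI kspan.simps(1) singletonI)
qed

lemma type_ii_iff: "type_ii q S \<longleftrightarrow> (\<exists>\<eta>. \<eta> \<noteq> 0 \<and> S = lifts q (graph_values \<eta>))"
  unfolding type_ii_def kspan_type_ii ..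

definition type_i_span :: "'a::field \<Rightarrow> 'a \<Rightarrow> 'a \<Rightarrow> 'a \<Rightarrow> 'a \<Rightarrow> 'a \<Rightarrow> bool" where
  "type_i_span \<epsilon> \<delta> \<gamma> a b c \<longleftrightarrow>
     (\<exists>c1 c2 c3. a = c1 * \<epsilon> + c2 * \<delta> \<and> b = c1 * \<epsilon> - c2 * \<delta> \<and> c = c3 * (\<epsilon> * \<delta> * \<gamma>))"

lemma kspan_type_i:
  "kspan
     [osmult \<epsilon> (oadd (ov0 (q * pt)) (ov1 (q * pt))),
      osmult \<delta> (oadd (ov0 (q * pt)) (osmult (-1) (ov1 (q * pt)))),
      osmult (\<epsilon> * \<delta> * \<gamma>) (ov2 (q * pt)),
      osmult \<epsilon>' (oadd (ov0 (q * ptm1)) (ov2 (q * ptm1))),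
      osmult \<delta>' (oadd (ov0 (q * ptm1)) (osmult (-1) (ov2 (q * ptm1)))),
      osmult (\<epsilon>' * \<delta>' * \<gamma>') (ov1 (q * ptm1))] =
   lifts q (\<lambda>x0 x1 x2 y0 y1 y2. type_i_span \<epsilon>' \<delta>' \<gamma>' x0 x2 x1 \<and> type_i_span \<epsilon> \<delta> \<gamma> y0 y1 y2)"
  (is "kspan [?g1, ?g2, ?g3, ?g4, ?g5, ?g6] = lifts q ?W")
proof (intro equalityI subsetI)
  fix u assume "u \<in> kspan [?g1, ?g2, ?g3, ?g4, ?g5, ?g6]"
  then obtain c1 c2 c3 c4 c5 c6 where "u = oadd (osmult c1 ?g1) (oadd (osmult c2 ?g2) (oadd (osmult c3 ?g3)
      (oadd (osmult c4 ?g4) (oadd (osmult c5 ?g5) (oadd (osmult c6 ?g6) ozero)))))"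
    by auto
  then have "u = olift q ((- c4) * \<epsilon>' + (- c5) * \<delta>') ((- c6) * (\<epsilon>' * \<delta>' * \<gamma>')) ((- c4) * \<epsilon>' - (- c5) * \<delta>')
      (c1 * \<epsilon> + c2 * \<delta>) (c1 * \<epsilon> - c2 * \<delta>) (c3 * (\<epsilon> * \<delta> * \<gamma>))"
    by (simp add: ov_olift algebra_simps)
  moreover have "?W ((- c4) * \<epsilon>' + (- c5) * \<delta>') ((- c6) * (\<epsilon>' * \<delta>' * \<gamma>')) ((- c4) * \<epsilon>' - (- c5) * \<delta>')
      (c1 * \<epsilon> + c2 * \<delta>) (c1 * \<epsilon> - c2 * \<delta>) (c3 * (\<epsilon> * \<delta> * \<gamma>))"
    unfolding type_i_span_def by blast
  ultimately show "u \<in> lifts q ?W"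
    unfolding lifts_def by blast
next
  fix u assume "u \<in> lifts q ?W"
  then obtain c1 c2 c3 c4 c5 c6 where "u = olift q (c4 * \<epsilon>' + c5 * \<delta>') (c6 * (\<epsilon>' * \<delta>' * \<gamma>')) (c4 * \<epsilon>' - c5 * \<delta>')
      (c1 * \<epsilon> + c2 * \<delta>) (c1 * \<epsilon> - c2 * \<delta>) (c3 * (\<epsilon> * \<delta> * \<gamma>))"
    unfolding lifts_def type_i_span_def by blast
  then have "u = oadd (osmult c1 ?g1) (oadd (osmult c2 ?g2) (oadd (osmult c3 ?g3)
      (oadd (osmult (- c4) ?g4) (oadd (osmult (- c5) ?g5) (oadd (osmult (- c6) ?g6) ozero)))))"
    by (simp add: ov_olift algebra_simps)
  then show "u \<in> kspan [?g1, ?g2, ?g3, ?g4, ?g5, ?g6]"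
    by (simp only: kspan_ConsI kspan.simps(1) singletonI)
qed

lemma type_i_span_Plus: "type_i_span 1 0 \<gamma> = slice_mem Plus"
  by (auto intro!: ext simp: type_i_span_def)

lemma type_i_span_Minus: "type_i_span 0 1 \<gamma> = slice_mem Minus"
  by (auto intro!: ext simp: type_i_span_def)

lemma sum_diff_decomposition:
  fixes a b :: "'a::field"
  assumes "(2::'a) \<noteq> 0"
  shows "\<exists>c1 c2. a = c1 + c2 \<and> b = c1 - c2"
proof -
  define c where "c = (a + b) / 2"
  have "c + c = a + b"
    using assms by (simp add: c_def mult_2[symmetric])
  then have "a = c + (a - c) \<and> b = c - (a - c)"
    by (simp add: algebra_simps)
  then show ?thesis
    by blast
qed

lemma type_i_span_Both:
  assumes "(2::'a::field) \<noteq> 0"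
  shows "type_i_span (1::'a) 1 0 = slice_mem Both"
  by (auto intro!: ext sum_diff_decomposition[OF assms] simp: type_i_span_def)

lemma type_i_span_Full:
  assumes "(2::'a::field) \<noteq> 0"
  shows "type_i_span (1::'a) 1 1 = slice_mem Full"
  by (auto intro!: ext sum_diff_decomposition[OF assms] simp: type_i_span_def)

lemma range_type_i_span:
  assumes "(2::'a::field) \<noteq> 0"
  shows "{type_i_span \<epsilon> \<delta> \<gamma> | \<epsilon> \<delta> \<gamma> :: 'a. \<epsilon> \<in> {0, 1} \<and> \<delta> \<in> {0, 1} \<and> \<gamma> \<in> {0, 1} \<and> \<epsilon> + \<delta> \<noteq> 0} =
    range slice_mem" (is "?L = _")
proof (intro equalityI subsetI)
  fix F :: "'a \<Rightarrow> 'a \<Rightarrow> 'a \<Rightarrow> bool" assume "F \<in> ?L"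
  then obtain \<epsilon> \<delta> \<gamma> :: 'a where F: "F = type_i_span \<epsilon> \<delta> \<gamma>"
    and "\<epsilon> = 0 \<or> \<epsilon> = 1" "\<delta> = 0 \<or> \<delta> = 1" "\<gamma> = 0 \<or> \<gamma> = 1" "\<epsilon> + \<delta> \<noteq> 0"
    by blast
  then consider "\<epsilon> = 1" "\<delta> = 0" | "\<epsilon> = 0" "\<delta> = 1" | "\<epsilon> = 1" "\<delta> = 1" "\<gamma> = 0" | "\<epsilon> = 1" "\<delta> = 1" "\<gamma> = 1"
    by (elim disjE) simp_all
  then show "F \<in> range slice_mem"
    by cases (simp_all add: F type_i_span_Plus type_i_span_Minus
      type_i_span_Both[OF assms] type_i_span_Full[OF assms])
next
  have mem: "type_i_span \<epsilon> \<delta> \<gamma> \<in> ?L"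
    if "\<epsilon> \<in> {0, 1}" "\<delta> \<in> {0, 1}" "\<gamma> \<in> {0, 1}" "\<epsilon> + \<delta> \<noteq> 0" for \<epsilon> \<delta> \<gamma> :: 'a
    using that by blast
  fix F :: "'a \<Rightarrow> 'a \<Rightarrow> 'a \<Rightarrow> bool" assume "F \<in> range slice_mem"
  then obtain k where "F = slice_mem k"
    by blast
  then show "F \<in> ?L"
    using mem[of 1 0 0] mem[of 0 1 0] mem[of 1 1 0] mem[of 1 1 1] assms
    by (cases k) (simp_all add: type_i_span_Plus type_i_span_Minus
      type_i_span_Both[OF assms] type_i_span_Full[OF assms])
qed

lemma slice_mem_eq_type_i_span:
  assumes "(2::'a) \<noteq> 0"
  obtains \<epsilon> \<delta> \<gamma> :: "'a::field" where "\<epsilon> \<in> {0, 1}" "\<delta> \<in> {0, 1}" "\<gamma> \<in> {0, 1}" "\<epsilon> + \<delta> \<noteq> 0"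
    and "slice_mem k = type_i_span \<epsilon> \<delta> \<gamma>"
proof -
  have "(slice_mem k :: 'a \<Rightarrow> 'a \<Rightarrow> 'a \<Rightarrow> bool) \<in> range slice_mem"
    by simp
  then obtain \<epsilon> \<delta> \<gamma> :: 'a where "slice_mem k = type_i_span \<epsilon> \<delta> \<gamma>"
    and "\<epsilon> \<in> {0, 1}" "\<delta> \<in> {0, 1}" "\<gamma> \<in> {0, 1}" "\<epsilon> + \<delta> \<noteq> 0"
    unfolding range_type_i_span[OF assms, symmetric] by blast
  then show thesis
    using that by blast
qed

lemma type_i_iff:
  fixes q :: "'a::field poly"
  assumes "(2::'a) \<noteq> 0"
  shows "type_i q S \<longleftrightarrow> (\<exists>k0 k1. S = lifts q (product_values k0 k1))"
proof
  assume "type_i q S"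
  then obtain \<epsilon> \<delta> \<gamma> \<epsilon>' \<delta>' \<gamma>' :: 'a
    where "\<epsilon> \<in> {0, 1}" "\<delta> \<in> {0, 1}" "\<gamma> \<in> {0, 1}" "\<epsilon> + \<delta> \<noteq> 0"
      and "\<epsilon>' \<in> {0, 1}" "\<delta>' \<in> {0, 1}" "\<gamma>' \<in> {0, 1}" "\<epsilon>' + \<delta>' \<noteq> 0"
      and S: "S = lifts q (\<lambda>x0 x1 x2 y0 y1 y2. type_i_span \<epsilon>' \<delta>' \<gamma>' x0 x2 x1 \<and> type_i_span \<epsilon> \<delta> \<gamma> y0 y1 y2)"
    unfolding type_i_def kspan_type_i by blast
  then have "type_i_span \<epsilon>' \<delta>' \<gamma>' \<in> range slice_mem" "type_i_span \<epsilon> \<delta> \<gamma> \<in> range slice_mem"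
    unfolding range_type_i_span[OF assms, symmetric] by blast+
  then obtain k0 k1 where "type_i_span \<epsilon>' \<delta>' \<gamma>' = slice_mem k0" "type_i_span \<epsilon> \<delta> \<gamma> = slice_mem k1"
    by blast
  then have "S = lifts q (product_values k0 k1)"
    by (simp add: S product_values_def[abs_def])
  then show "\<exists>k0 k1. S = lifts q (product_values k0 k1)"
    by blast
next
  assume "\<exists>k0 k1. S = lifts q (product_values k0 k1)"
  then obtain k0 k1 where S: "S = lifts q (product_values k0 k1)"
    by blast
  obtain \<epsilon>' \<delta>' \<gamma>' :: 'a
    where "\<epsilon>' \<in> {0, 1}" "\<delta>' \<in> {0, 1}" "\<gamma>' \<in> {0, 1}" "\<epsilon>' + \<delta>' \<noteq> 0"
      and k0: "slice_mem k0 = type_i_span \<epsilon>' \<delta>' \<gamma>'"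
    using slice_mem_eq_type_i_span[OF assms] .
  moreover obtain \<epsilon> \<delta> \<gamma> :: 'a
    where "\<epsilon> \<in> {0, 1}" "\<delta> \<in> {0, 1}" "\<gamma> \<in> {0, 1}" "\<epsilon> + \<delta> \<noteq> 0"
      and k1: "slice_mem k1 = type_i_span \<epsilon> \<delta> \<gamma>"
    using slice_mem_eq_type_i_span[OF assms] .
  moreover have
    "S = lifts q (\<lambda>x0 x1 x2 y0 y1 y2. type_i_span \<epsilon>' \<delta>' \<gamma>' x0 x2 x1 \<and> type_i_span \<epsilon> \<delta> \<gamma> y0 y1 y2)"
    by (simp add: S k0 k1 product_values_def[abs_def])
  ultimately show "type_i q S"
    unfolding type_i_def kspan_type_i by blast
qed

lemma types_iff_lifts_value_ideal:
  fixes q :: "'a::field poly"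
  assumes "(2::'a) \<noteq> 0"
  shows "type_i q S \<or> type_ii q S \<longleftrightarrow> (\<exists>W. value_ideal W \<and> S = lifts q W)"
proof
  assume "type_i q S \<or> type_ii q S"
  then show "\<exists>W. value_ideal W \<and> S = lifts q W"
    unfolding type_i_iff[OF assms] type_ii_iff
    using value_ideal_product_values value_ideal_graph_values by blast
next
  assume "\<exists>W. value_ideal W \<and> S = lifts q W"
  then obtain W where "value_ideal W" and "S = lifts q W"
    by blast
  then show "type_i q S \<or> type_ii q S"
    unfolding type_i_iff[OF assms] type_ii_iff using value_ideal.classification by blast
qed

theorem proposition4p8:
  fixes q :: "'a::field poly" and I :: "'a onsager set"
  assumes "CHAR('a) \<noteq> 2" and "q \<noteq> 0"
  shows "(is_lie_ideal I \<and> J_of I = pideal q) \<longleftrightarrow>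
         (\<exists>S. is_direct_sum I (OJ (pideal (q * pt * ptm1))) S \<and> (type_i q S \<or> type_ii q S))"
proof -
  have direct_sum: "value_ideal W \<and> I = preimage01 q W \<longleftrightarrow>
      value_ideal W \<and> is_direct_sum I (OJ (pideal (q * pt * ptm1))) (lifts q W)" for W
    using direct_sum_lifts_iff[of q W I] assms(2) value_ideal.zero[of W] by blast
  have "(is_lie_ideal I \<and> J_of I = pideal q) \<longleftrightarrow> (\<exists>W. value_ideal W \<and> I = preimage01 q W)"
    by (rule lie_ideal_iff_value_ideal)
  also have "\<dots> \<longleftrightarrow> (\<exists>W. value_ideal W \<and> is_direct_sum I (OJ (pideal (q * pt * ptm1))) (lifts q W))"
    unfolding direct_sum ..
  also have "\<dots> \<longleftrightarrow> (\<exists>S. is_direct_sum I (OJ (pideal (q * pt * ptm1))) S \<and> (type_i q S \<or> type_ii q S))"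
    unfolding types_iff_lifts_value_ideal[OF two_neq_zero_if_CHAR_neq_2[OF assms(1)]] by blast
  finally show ?thesis .
qed

end
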